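(* Let $i\in\{3\frac{1}{2},4,5\}$ and let $X$ be a locally connected $T_i$-space. Let $\mathscr{Y}_i(X)$ be the set of (equivalence classes of) $T_i$ one-point connectifications of $X$, where for $Y_1,Y_2\in\mathscr{Y}_i(X)$ we put $Y_1\leq Y_2$ if there is a continuous map $f:Y_2\to Y_1$ fixing every point of $X$. Let $$\mathscr{Z}(X)=\{Z\subseteq\beta X\setminus X:\ Z\text{ is compact and } Z\cap\mathrm{cl}_{\beta X}C\neq\emptyset\text{ for every component }C\text{ of }X\},$$ partially ordered by inclusion. For $Z\in\mathscr{Z}(X)$ let $Q$ be the quotient space of $\beta X$ obtained by contracting $Z$ to a single point $z$, and let $\zeta_X(Z)=X\cup\{z\}$, regarded as a subspace of $Q$. Then $\zeta_X(Z)\in\mathscr{Y}_i(X)$ for every $Z\in\mathscr{Z}(X)$, and the map $\zeta_X:(\mathscr{Z}(X),\subseteq)\to(\mathscr{Y}_i(X),\leq)$ is an anti-order-isomorphism.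
   Context: Conventions: $T_{3\frac12}$ = completely regular and $T_1$; $T_4$ = normal and $T_1$; $T_5$ = hereditarily normal (every subspace normal) and $T_1$. $\beta X$ denotes the Stone–Čech compactification of $X$. A one-point connectification of $X$ is a connected space $Y$ containing $X$ as a dense subspace with $Y\setminus X$ a singleton; two one-point connectifications are equivalent if there is a homeomorphism between them fixing every point of $X$, and equivalent ones are identified. A map $f:P\to Q$ between partially ordered sets is an anti-order-homomorphism if $a\le b$ implies $f(b)\le f(a)$; it is an anti-order-isomorphism if it is bijective and both $f$ and $f^{-1}$ are anti-order-homomorphisms. *)

theory Defs
  imports "HOL-Analysis.Analysis"
begin

datatype sep_axiom = T3half | T4 | T5

fun Ti_space :: "sep_axiom \<Rightarrow> 'a topology \<Rightarrow> bool" where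
  "Ti_space T3half Y \<longleftrightarrow> completely_regular_space Y \<and> t1_space Y"
| "Ti_space T4 Y \<longleftrightarrow> normal_space Y \<and> t1_space Y"
| "Ti_space T5 Y \<longleftrightarrow> hereditarily normal_space Y \<and> t1_space Y"

definition stone_cech :: "'a topology \<Rightarrow> 'a topology \<Rightarrow> bool" where
  "stone_cech X B \<longleftrightarrow>
     compact_space B \<and> Hausdorff_space B \<and>
     topspace X \<subseteq> topspace B \<and> subtopology B (topspace X) = X \<and>
     B closure_of (topspace X) = topspace B \<and>
     (\<forall>f. continuous_map X (top_of_set {0..1::real}) f \<longrightarrow>
        (\<exists>g. continuous_map B (top_of_set {0..1::real}) g \<and> (\<forall>x\<in>topspace X. g x = f x)))"

definition quotient_top :: "'a topology \<Rightarrow> ('a \<Rightarrow> 'b) \<Rightarrow> 'b topology" where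
  "quotient_top T f = topology (\<lambda>U. U \<subseteq> f ` topspace T \<and> openin T {x \<in> topspace T. f x \<in> U})"

text \<open>One-point connectifications of X are represented on the type 'a option:
  a point x of X is represented by Some x and the extra point by None.  Two
  one-point connectifications represented this way are equivalent iff they are
  equal, so this set represents exactly the equivalence classes.\<close>
definition one_point_connectifications :: "sep_axiom \<Rightarrow> 'a topology \<Rightarrow> 'a option topology set" where
  "one_point_connectifications i X =
     {Y. topspace Y = insert None (Some ` topspace X) \<and>
         homeomorphic_map X (subtopology Y (Some ` topspace X)) Some \<and>
         Y closure_of (Some ` topspace X) = topspace Y \<and>
         connected_space Y \<and> Ti_space i Y}"

definition opc_le :: "'a topology \<Rightarrow> 'a option topology \<Rightarrow> 'a option topology \<Rightarrow> bool" where
  "opc_le X Y1 Y2 \<longleftrightarrow> (\<exists>f. continuous_map Y2 Y1 f \<and> (\<forall>x\<in>topspace X. f (Some x) = Some x))"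

definition Zsets :: "'a topology \<Rightarrow> 'a topology \<Rightarrow> 'a set set" where
  "Zsets X B = {Z. Z \<subseteq> topspace B - topspace X \<and> compactin B Z \<and>
                   (\<forall>C\<in>connected_components_of X. Z \<inter> B closure_of C \<noteq> {})}"

definition zeta :: "'a topology \<Rightarrow> 'a topology \<Rightarrow> 'a set \<Rightarrow> 'a option topology" where
  "zeta X B Z = subtopology (quotient_top B (\<lambda>p. if p \<in> Z then None else Some p))
                            (insert None (Some ` topspace X))"

end

theory Submission
  imports Defs
begin

text \<open>
  \<zeta>(Z) is T_i because it is a subspace of the compact Hausdorff quotient \<beta>X/Z,
  and the T_i property passes from X to any completely regular T1 space
  obtained by adding one point; it is connected because the extra point lies in the
  closure of every component of X.

  Conversely, a T_i connectification Y determines Z_Y, the intersection of the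
  closures in \<beta>X of the traces on X of all neighbourhoods of the extra point.
  Z_Y misses X because Y is Hausdorff, and it meets the closure of every component C
  of X: otherwise, by compactness, some neighbourhood of the extra point would miss C,
  making C (open by local connectedness) clopen in Y.  The neighbourhoods of the extra
  point in Y are exactly the traces of neighbourhoods of Z_Y in \<beta>X: one direction
  is again compactness, the other extends a Urysohn function of Y to \<beta>X.  Hence
  \<zeta>(Z_Y) = Y.

  Finally, a continuous map \<zeta>(Z1) \<rightarrow> \<zeta>(Z2) fixing X must fix the
  extra point, and then continuity there together with density of X in \<beta>X forces
  Z1 \<subseteq> Z2.
\<close>

section \<open>Quotient topologies\<close>

lemma openin_quotient_top:
  "openin (quotient_top T f) U \<longleftrightarrow> U \<subseteq> f ` topspace T \<and> openin T {x \<in> topspace T. f x \<in> U}"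
proof -
  have inter: "{x \<in> topspace T. f x \<in> S \<inter> U} = {x \<in> topspace T. f x \<in> S} \<inter> {x \<in> topspace T. f x \<in> U}"
    for S U by auto
  have union: "{x \<in> topspace T. f x \<in> \<Union>K} = (\<Union>U\<in>K. {x \<in> topspace T. f x \<in> U})" for K
    by auto
  have "istopology (\<lambda>U. U \<subseteq> f ` topspace T \<and> openin T {x \<in> topspace T. f x \<in> U})"
    unfolding istopology_def inter union by auto
  then show ?thesis
    unfolding quotient_top_def by (simp add: topology_inverse')
qed

lemma topspace_quotient_top: "topspace (quotient_top T f) = f ` topspace T"
proof (rule subset_antisym)
  show "topspace (quotient_top T f) \<subseteq> f ` topspace T"
    by (metis openin_quotient_top openin_topspace)
  have "{x \<in> topspace T. f x \<in> f ` topspace T} = topspace T"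
    by auto
  then have "openin (quotient_top T f) (f ` topspace T)"
    by (simp add: openin_quotient_top)
  then show "f ` topspace T \<subseteq> topspace (quotient_top T f)"
    by (rule openin_subset)
qed

lemma continuous_map_quotient_top: "continuous_map T (quotient_top T f) f"
  by (auto simp: continuous_map_def topspace_quotient_top openin_quotient_top)

section \<open>Separation axioms of one-point extensions\<close>

lemma normal_separation_one_point:
  assumes reg: "regular_space Y" and p: "p \<in> topspace Y" "closedin Y {p}"
    and nor: "normal_space (subtopology Y (topspace Y - {p}))"
    and S: "closedin Y S" and T: "closedin Y T" and "disjnt S T" and "p \<notin> T"
  shows "\<exists>U V. openin Y U \<and> openin Y V \<and> S \<subseteq> U \<and> T \<subseteq> V \<and> disjnt U V"
proof -
  obtain U0 V0 where U0: "openin Y U0" "openin Y V0" "p \<in> U0" "T \<subseteq> V0" "disjnt U0 V0"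
    using reg T p \<open>p \<notin> T\<close> unfolding regular_space_def by (metis Diff_iff)
  let ?P = "topspace Y - {p}"
  have "closedin Y (S - U0)"
    using S U0(1) by (rule closedin_diff)
  then have "closedin (subtopology Y ?P) (S - U0)"
    using closedin_subset[OF S] U0(3) by (auto intro: closedin_subset_topspace)
  moreover have "closedin (subtopology Y ?P) T"
    using closedin_subset[OF T] T \<open>p \<notin> T\<close> by (auto intro: closedin_subset_topspace)
  moreover have "disjnt (S - U0) T"
    using \<open>disjnt S T\<close> by (auto simp: disjnt_def)
  ultimately obtain U1 V1 where U1: "openin (subtopology Y ?P) U1" "openin (subtopology Y ?P) V1"
      "S - U0 \<subseteq> U1" "T \<subseteq> V1" "disjnt U1 V1"
    using nor unfolding normal_space_def by metis
  have "openin Y ?P"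
    using p by blast
  then have "openin Y U1" "openin Y V1"
    using U1 openin_open_subtopology by blast+
  with U0 U1 show ?thesis
    by (intro exI[of _ "U1 \<union> U0"] exI[of _ "V1 \<inter> V0"]) (auto simp: disjnt_def)
qed

lemma normal_space_one_point:
  assumes "regular_space Y" "p \<in> topspace Y" "closedin Y {p}"
    and "normal_space (subtopology Y (topspace Y - {p}))"
  shows "normal_space Y"
  unfolding normal_space_def
proof (intro allI impI, elim conjE)
  fix S T assume ST: "closedin Y S" "closedin Y T" "disjnt S T"
  show "\<exists>U V. openin Y U \<and> openin Y V \<and> S \<subseteq> U \<and> T \<subseteq> V \<and> disjnt U V"
  proof (cases "p \<in> T")
    case False
    with normal_separation_one_point[OF assms ST] show ?thesis .
  next
    case True
    with ST have "p \<notin> S" "disjnt T S"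
      by (auto simp: disjnt_def)
    with normal_separation_one_point[OF assms ST(2,1)] show ?thesis
      by (metis disjnt_sym)
  qed
qed

lemma Ti_space_imp_completely_regular_space: "Ti_space i Y \<Longrightarrow> completely_regular_space Y"
  by (cases i) (auto intro: normal_imp_completely_regular_space_A dest: hereditarily_inc)

lemma Ti_space_imp_t1_space: "Ti_space i Y \<Longrightarrow> t1_space Y"
  by (cases i) auto

lemma Ti_space_imp_Hausdorff_space: "Ti_space i Y \<Longrightarrow> Hausdorff_space Y"
  by (meson Ti_space_imp_completely_regular_space Ti_space_imp_t1_space
      completely_regular_imp_regular_space regular_t1_imp_Hausdorff_space)

lemma Ti_space_one_point:
  assumes cr: "completely_regular_space Y" and t1: "t1_space Y" and p: "p \<in> topspace Y"
    and hom: "X homeomorphic_space subtopology Y (topspace Y - {p})"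
    and Ti: "Ti_space i X"
  shows "Ti_space i Y"
proof -
  have reg: "regular_space Y"
    using cr completely_regular_imp_regular_space by blast
  show ?thesis
  proof (cases i)
    case T3half
    with cr t1 show ?thesis by simp
  next
    case T4
    with Ti hom have "normal_space (subtopology Y (topspace Y - {p}))"
      using homeomorphic_normal_space by auto
    with normal_space_one_point[OF reg p] t1 p T4 show ?thesis
      by (simp add: t1_space_closedin_singleton)
  next
    case T5
    with Ti hom have hn: "hereditarily normal_space (subtopology Y (topspace Y - {p}))"
      using homeomorphic_hereditarily_normal_space by auto
    have "normal_space (subtopology Y S)" for S
    proof -
      let ?S = "subtopology Y S"
      have "subtopology ?S (topspace ?S - {p}) = subtopology (subtopology Y (topspace Y - {p})) S"
        by (simp add: subtopology_subtopology Int_Diff Int_commute)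
      then have nor: "normal_space (subtopology ?S (topspace ?S - {p}))"
        using hn unfolding hereditarily by simp
      show ?thesis
      proof (cases "p \<in> S")
        case True
        with p have "p \<in> topspace ?S"
          by simp
        moreover have "closedin ?S {p}"
          using t1_space_subtopology[OF t1] calculation by (simp add: t1_space_closedin_singleton)
        ultimately show ?thesis
          using normal_space_one_point[OF regular_space_subtopology[OF reg]] nor by blast
      next
        case False
        then have "topspace ?S - {p} = topspace ?S"
          by auto
        with nor show ?thesis
          by (metis subtopology_topspace)
      qed
    qed
    with T5 t1 show ?thesis
      by (simp add: hereditarily)
  qed
qed

section \<open>Contracting a compactum in the remainder of \<beta>X\<close>

lemma homeomorphic_map_SomeI:
  assumes top: "topspace Y = Some ` topspace X"
    and open_iff: "\<And>N. openin Y N \<longleftrightarrow> N \<subseteq> Some ` topspace X \<and> openin X (topspace X \<inter> Some -` N)"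
  shows "homeomorphic_map X Y Some"
  unfolding homeomorphic_map_maps homeomorphic_maps_def
proof (intro exI[of _ the] conjI)
  show "continuous_map X Y Some"
    unfolding continuous_map_def using top open_iff by (auto simp: Int_def)
  have "openin Y {y \<in> topspace Y. the y \<in> U}" if "openin X U" for U
  proof -
    have "{y \<in> topspace Y. the y \<in> U} = Some ` U" "topspace X \<inter> Some -` Some ` U = U"
      using top openin_subset[OF that] by auto
    then show ?thesis
      using open_iff that openin_subset[OF that] by auto
  qed
  then show "continuous_map Y X the"
    unfolding continuous_map_def using top by auto
qed (use top in auto)

definition contract :: "'a set \<Rightarrow> 'a \<Rightarrow> 'a option" where
  "contract Z p = (if p \<in> Z then None else Some p)"

lemma zeta_eq_subtopology:
  "zeta X B Z = subtopology (quotient_top B (contract Z)) (insert None (Some ` topspace X))"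
  unfolding zeta_def contract_def ..

locale stone_cech_compactification =
  fixes X B :: "'a topology"
  assumes stone_cech: "stone_cech X B"
begin

lemma compact_space_B: "compact_space B"
  and Hausdorff_space_B: "Hausdorff_space B"
  and topspace_X_subset: "topspace X \<subseteq> topspace B"
  and subtopology_B_X: "subtopology B (topspace X) = X"
  and closure_of_topspace_X: "B closure_of (topspace X) = topspace B"
  using stone_cech unfolding stone_cech_def by blast+

lemma extend_unit_interval_map:
  assumes "continuous_map X (top_of_set {0..1::real}) f"
  obtains g where "continuous_map B (top_of_set {0..1}) g" "\<And>x. x \<in> topspace X \<Longrightarrow> g x = f x"
  using stone_cech assms unfolding stone_cech_def by metis

lemma openin_X_iff: "openin X U \<longleftrightarrow> (\<exists>V. openin B V \<and> U = V \<inter> topspace X)"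
  by (metis openin_subtopology subtopology_B_X)

lemma openin_meets_topspace_X:
  assumes "openin B W" "b \<in> W"
  obtains x where "x \<in> topspace X" "x \<in> W"
proof -
  have "b \<in> B closure_of topspace X"
    using assms closure_of_topspace_X openin_subset by blast
  with assms that show ?thesis
    unfolding in_closure_of by blast
qed

definition remainder_compactum :: "'a set \<Rightarrow> bool" where
  "remainder_compactum Z \<longleftrightarrow> Z \<subseteq> topspace B - topspace X \<and> Z \<noteq> {} \<and> compactin B Z"

lemma remainder_compactum_closedin: "remainder_compactum Z \<Longrightarrow> closedin B Z"
  unfolding remainder_compactum_def using compactin_imp_closedin Hausdorff_space_B by blast

lemma Zsets_imp_remainder_compactum:
  assumes "topspace X \<noteq> {}" "Z \<in> Zsets X B"
  shows "remainder_compactum Z"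
proof -
  obtain C where "C \<in> connected_components_of X"
    using assms(1) Union_connected_components_of[of X] by blast
  with assms(2) show ?thesis
    unfolding Zsets_def remainder_compactum_def by auto
qed

context
  fixes Z assumes Z: "remainder_compactum Z"
begin

lemma topspace_quotient_contract: "topspace (quotient_top B (contract Z)) = insert None (Some ` (topspace B - Z))"
  using Z unfolding remainder_compactum_def
  by (auto simp: topspace_quotient_top contract_def image_iff)

lemma topspace_zeta: "topspace (zeta X B Z) = insert None (Some ` topspace X)"
  using Z topspace_X_subset unfolding remainder_compactum_def
  by (auto simp: zeta_eq_subtopology topspace_quotient_contract)

lemma openin_quotient_contract:
  assumes "openin B V"
  shows "V \<inter> Z = {} \<Longrightarrow> openin (quotient_top B (contract Z)) (Some ` V)"
    and "Z \<subseteq> V \<Longrightarrow> openin (quotient_top B (contract Z)) (insert None (Some ` (V - Z)))"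
proof -
  have VB: "V \<subseteq> topspace B"
    using assms by (rule openin_subset)
  show "openin (quotient_top B (contract Z)) (Some ` V)" if "V \<inter> Z = {}"
  proof -
    have "{x \<in> topspace B. contract Z x \<in> Some ` V} = V"
      using VB that by (auto simp: contract_def)
    moreover have "Some ` V \<subseteq> topspace (quotient_top B (contract Z))"
      using VB that by (auto simp: topspace_quotient_contract)
    ultimately show ?thesis
      using assms by (simp add: openin_quotient_top topspace_quotient_top)
  qed
  show "openin (quotient_top B (contract Z)) (insert None (Some ` (V - Z)))" if "Z \<subseteq> V"
  proof -
    have "{x \<in> topspace B. contract Z x \<in> insert None (Some ` (V - Z))} = V"
      using VB that by (auto simp: contract_def)
    moreover have "insert None (Some ` (V - Z)) \<subseteq> topspace (quotient_top B (contract Z))"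
      using VB by (auto simp: topspace_quotient_contract)
    ultimately show ?thesis
      using assms by (simp add: openin_quotient_top topspace_quotient_top)
  qed
qed

lemma openin_zeta:
  "openin (zeta X B Z) N \<longleftrightarrow> N \<subseteq> insert None (Some ` topspace X) \<and>
     (\<exists>V. openin B V \<and> (None \<in> N \<longrightarrow> Z \<subseteq> V) \<and> (None \<notin> N \<longrightarrow> V \<inter> Z = {}) \<and>
          topspace X \<inter> Some -` N = V \<inter> topspace X)"
    (is "?lhs \<longleftrightarrow> ?rhs")
proof
  let ?T = "insert None (Some ` topspace X)"
  have XZ: "topspace X \<inter> Z = {}"
    using Z unfolding remainder_compactum_def by blast
  show ?rhs if ?lhs
  proof -
    obtain M where M: "openin (quotient_top B (contract Z)) M" "N = M \<inter> ?T"
      using \<open>?lhs\<close> unfolding zeta_eq_subtopology openin_subtopology by blast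
    define V where "V = {x \<in> topspace B. contract Z x \<in> M}"
    have "openin B V"
      using M(1) unfolding V_def openin_quotient_top by blast
    moreover have "(None \<in> N \<longrightarrow> Z \<subseteq> V) \<and> (None \<notin> N \<longrightarrow> V \<inter> Z = {}) \<and>
        topspace X \<inter> Some -` N = V \<inter> topspace X"
      using M(2) XZ Z topspace_X_subset unfolding V_def contract_def remainder_compactum_def by auto
    ultimately show ?rhs
      using M(2) by blast
  qed
  show ?lhs if ?rhs
  proof -
    obtain V where V: "openin B V" "None \<in> N \<longrightarrow> Z \<subseteq> V" "None \<notin> N \<longrightarrow> V \<inter> Z = {}"
        "topspace X \<inter> Some -` N = V \<inter> topspace X"
      using \<open>?rhs\<close> by blast
    define M where "M = (if None \<in> N then insert None (Some ` (V - Z)) else Some ` V)"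
    have "openin (quotient_top B (contract Z)) M"
      using V openin_quotient_contract[OF V(1)] unfolding M_def by auto
    moreover have "N = M \<inter> ?T"
    proof (rule set_eqI)
      fix y
      show "y \<in> N \<longleftrightarrow> y \<in> M \<inter> ?T"
        using \<open>?rhs\<close> V(4) XZ unfolding M_def by (cases y) auto
    qed
    ultimately show ?lhs
      unfolding zeta_eq_subtopology openin_subtopology by blast
  qed
qed


lemma openin_zeta_Some:
  assumes "openin B V"
  shows "openin (zeta X B Z) (Some ` (V \<inter> topspace X))"
proof -
  have "openin B (V - Z)"
    using assms remainder_compactum_closedin[OF Z] by (rule openin_diff)
  moreover have "(V - Z) \<inter> topspace X = V \<inter> topspace X"
    using Z unfolding remainder_compactum_def by auto
  moreover have "topspace X \<inter> Some -` Some ` (V \<inter> topspace X) = V \<inter> topspace X"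
    by auto
  ultimately show ?thesis
    unfolding openin_zeta by blast
qed

lemma openin_zeta_insert_None:
  assumes "openin B V" "Z \<subseteq> V"
  shows "openin (zeta X B Z) (insert None (Some ` (V \<inter> topspace X)))"
proof -
  have "topspace X \<inter> Some -` insert None (Some ` (V \<inter> topspace X)) = V \<inter> topspace X"
    by auto
  with assms show ?thesis
    unfolding openin_zeta by blast
qed

lemma zeta_neighbourhood_None:
  assumes "openin (zeta X B Z) N" "None \<in> N"
  obtains V where "openin B V" "Z \<subseteq> V" "V \<inter> topspace X \<subseteq> Some -` N"
proof -
  obtain V where "openin B V" "Z \<subseteq> V" "topspace X \<inter> Some -` N = V \<inter> topspace X"
    using assms unfolding openin_zeta by blast
  then show ?thesis
    using that by blast
qed

lemma compact_space_quotient_contract: "compact_space (quotient_top B (contract Z))"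
  using image_compactin[OF compact_space_B[unfolded compact_space_def] continuous_map_quotient_top]
  by (simp add: compact_space_def topspace_quotient_top)

lemma Hausdorff_space_quotient_contract: "Hausdorff_space (quotient_top B (contract Z))"
proof -
  let ?Q = "quotient_top B (contract Z)"
  have sep_None: "\<exists>U V. openin ?Q U \<and> openin ?Q V \<and> None \<in> U \<and> Some b \<in> V \<and> disjnt U V"
    if b: "b \<in> topspace B - Z" for b
  proof -
    have "compactin B Z" "compactin B {b}" "disjnt Z {b}"
      using Z b unfolding remainder_compactum_def by auto
    then obtain U W where UW: "openin B U" "openin B W" "Z \<subseteq> U" "{b} \<subseteq> W" "disjnt U W"
      by (rule Hausdorff_space_compact_separation[OF Hausdorff_space_B])
    then have "W \<inter> Z = {}"
      by (auto simp: disjnt_def)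
    then have "openin ?Q (insert None (Some ` (U - Z)))" "openin ?Q (Some ` W)"
      using openin_quotient_contract(2)[OF UW(1,3)] openin_quotient_contract(1)[OF UW(2)] by blast+
    moreover have "disjnt (insert None (Some ` (U - Z))) (Some ` W)"
      using UW(5) by (auto simp: disjnt_def)
    ultimately show ?thesis
      using UW(4) by blast
  qed
  have sep_Some: "\<exists>U V. openin ?Q U \<and> openin ?Q V \<and> Some a \<in> U \<and> Some b \<in> V \<and> disjnt U V"
    if ab: "a \<in> topspace B - Z" "b \<in> topspace B - Z" "a \<noteq> b" for a b
  proof -
    obtain U W where UW: "openin B U" "openin B W" "a \<in> U" "b \<in> W" "disjnt U W"
      using Hausdorff_space_B ab unfolding Hausdorff_space_def by (metis Diff_iff)
    have "openin ?Q (Some ` (U - Z))"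
      using openin_quotient_contract(1)[OF openin_diff[OF UW(1) remainder_compactum_closedin[OF Z]]]
      by blast
    moreover have "openin ?Q (Some ` (W - Z))"
      using openin_quotient_contract(1)[OF openin_diff[OF UW(2) remainder_compactum_closedin[OF Z]]]
      by blast
    moreover have "disjnt (Some ` (U - Z)) (Some ` (W - Z))"
      using UW(5) by (auto simp: disjnt_def)
    moreover have "Some a \<in> Some ` (U - Z)" "Some b \<in> Some ` (W - Z)"
      using UW ab by auto
    ultimately show ?thesis
      by blast
  qed
  show ?thesis
    unfolding Hausdorff_space_def topspace_quotient_contract
  proof (intro allI impI, elim conjE)
    fix x y assume x: "x \<in> insert None (Some ` (topspace B - Z))"
      and y: "y \<in> insert None (Some ` (topspace B - Z))" and "x \<noteq> y"
    show "\<exists>U V. openin ?Q U \<and> openin ?Q V \<and> x \<in> U \<and> y \<in> V \<and> disjnt U V"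
    proof (cases x)
      case None
      with y \<open>x \<noteq> y\<close> obtain b where "y = Some b" "b \<in> topspace B - Z"
        by auto
      with None show ?thesis
        using sep_None by blast
    next
      case (Some a)
      show ?thesis
      proof (cases y)
        case None
        from x Some have "a \<in> topspace B - Z"
          by auto
        then obtain U V where "openin ?Q U" "openin ?Q V" "None \<in> U" "Some a \<in> V" "disjnt U V"
          using sep_None by blast
        with None Some show ?thesis
          using disjnt_sym by blast
      next
        case (Some b)
        with x y \<open>x = Some a\<close> \<open>x \<noteq> y\<close> have "a \<in> topspace B - Z" "b \<in> topspace B - Z" "a \<noteq> b"
          by auto
        with sep_Some \<open>x = Some a\<close> Some show ?thesis
          by blast
      qed
    qed
  qed
qed

lemma completely_regular_space_zeta: "completely_regular_space (zeta X B Z)"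
proof -
  have "normal_space (quotient_top B (contract Z))"
    using compact_Hausdorff_or_regular_imp_normal_space compact_space_quotient_contract
      Hausdorff_space_quotient_contract by blast
  then have "completely_regular_space (quotient_top B (contract Z))"
    using Hausdorff_space_quotient_contract Hausdorff_imp_t1_space normal_imp_completely_regular_space_A
    by blast
  then show ?thesis
    unfolding zeta_eq_subtopology by (rule completely_regular_space_subtopology)
qed

lemma t1_space_zeta: "t1_space (zeta X B Z)"
  unfolding zeta_eq_subtopology
  using Hausdorff_space_quotient_contract Hausdorff_space_subtopology Hausdorff_imp_t1_space by blast

lemma homeomorphic_map_zeta: "homeomorphic_map X (subtopology (zeta X B Z) (Some ` topspace X)) Some"
proof (rule homeomorphic_map_SomeI)
  show "topspace (subtopology (zeta X B Z) (Some ` topspace X)) = Some ` topspace X"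
    using topspace_zeta by auto
  fix N
  show "openin (subtopology (zeta X B Z) (Some ` topspace X)) N \<longleftrightarrow>
        N \<subseteq> Some ` topspace X \<and> openin X (topspace X \<inter> Some -` N)"
  proof
    assume "openin (subtopology (zeta X B Z) (Some ` topspace X)) N"
    then obtain N' where N': "openin (zeta X B Z) N'" "N = N' \<inter> Some ` topspace X"
      unfolding openin_subtopology by blast
    then obtain V where "openin B V" "topspace X \<inter> Some -` N' = V \<inter> topspace X"
      unfolding openin_zeta by blast
    moreover have "topspace X \<inter> Some -` N = topspace X \<inter> Some -` N'"
      using N'(2) by auto
    ultimately show "N \<subseteq> Some ` topspace X \<and> openin X (topspace X \<inter> Some -` N)"
      using N'(2) openin_X_iff by auto
  next
    assume N: "N \<subseteq> Some ` topspace X \<and> openin X (topspace X \<inter> Some -` N)"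
    then obtain V where V: "openin B V" "topspace X \<inter> Some -` N = V \<inter> topspace X"
      using openin_X_iff by blast
    have "N = Some ` (V \<inter> topspace X)"
      using N V(2) by blast
    moreover have "openin (subtopology (zeta X B Z) (Some ` topspace X))
        (Some ` (V \<inter> topspace X) \<inter> Some ` topspace X)"
      using openin_zeta_Some[OF V(1)] by (rule openin_subtopology_Int)
    ultimately show "openin (subtopology (zeta X B Z) (Some ` topspace X)) N"
      by (simp add: Int_absorb2 image_mono)
  qed
qed

lemma None_in_closure_of_zeta:
  assumes "C \<subseteq> topspace X" "Z \<inter> B closure_of C \<noteq> {}"
  shows "None \<in> zeta X B Z closure_of (Some ` C)"
  unfolding in_closure_of
proof (intro conjI allI impI)
  show "None \<in> topspace (zeta X B Z)"
    by (simp add: topspace_zeta)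
  fix N assume "None \<in> N \<and> openin (zeta X B Z) N"
  then obtain V where V: "openin B V" "Z \<subseteq> V" "V \<inter> topspace X \<subseteq> Some -` N"
    using zeta_neighbourhood_None by blast
  obtain b where "b \<in> Z" "b \<in> B closure_of C"
    using assms(2) by blast
  then obtain x where "x \<in> C" "x \<in> V"
    using V(1,2) unfolding in_closure_of by blast
  then show "\<exists>y. y \<in> Some ` C \<and> y \<in> N"
    using V(3) assms(1) by blast
qed

lemma topspace_X_nonempty: "topspace X \<noteq> {}"
  using Z closure_of_topspace_X unfolding remainder_compactum_def by auto

lemma closure_of_zeta_dense: "zeta X B Z closure_of (Some ` topspace X) = topspace (zeta X B Z)"
proof -
  have "Z \<inter> B closure_of topspace X \<noteq> {}"
    using Z closure_of_topspace_X unfolding remainder_compactum_def by auto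
  then have "None \<in> zeta X B Z closure_of (Some ` topspace X)"
    by (rule None_in_closure_of_zeta[OF order_refl])
  moreover have "Some ` topspace X \<subseteq> zeta X B Z closure_of (Some ` topspace X)"
    by (rule closure_of_subset) (simp add: topspace_zeta subset_insertI)
  ultimately have "topspace (zeta X B Z) \<subseteq> zeta X B Z closure_of (Some ` topspace X)"
    by (simp add: topspace_zeta)
  then show ?thesis
    by (rule subset_antisym[OF closure_of_subset_topspace])
qed

lemma connected_space_zeta:
  assumes meets: "\<And>C. C \<in> connected_components_of X \<Longrightarrow> Z \<inter> B closure_of C \<noteq> {}"
  shows "connected_space (zeta X B Z)"
proof -
  let ?Y = "zeta X B Z"
  define \<U> where "\<U> = (\<lambda>C. insert None (Some ` C)) ` connected_components_of X"
  have "connectedin ?Y (insert None (Some ` C))" if C: "C \<in> connected_components_of X" for C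
  proof -
    have CX: "C \<subseteq> topspace X"
      using C connected_components_of_subset by blast
    have "continuous_map X ?Y Some"
      using homeomorphic_imp_continuous_map[OF homeomorphic_map_zeta] continuous_map_in_subtopology
      by blast
    then have "connectedin ?Y (Some ` C)"
      using connectedin_continuous_map_image connectedin_connected_components_of[OF C] by blast
    moreover have "Some ` C \<subseteq> ?Y closure_of (Some ` C)"
      using CX by (intro closure_of_subset) (auto simp: topspace_zeta)
    with None_in_closure_of_zeta[OF CX meets[OF C]]
    have "insert None (Some ` C) \<subseteq> ?Y closure_of (Some ` C)"
      by blast
    ultimately show ?thesis
      by (rule connectedin_intermediate_closure_of[OF _ subset_insertI])
  qed
  moreover have "None \<in> \<Inter>\<U>"
    unfolding \<U>_def by blast
  ultimately have "connectedin ?Y (\<Union>\<U>)"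
    unfolding \<U>_def by (intro connectedin_Union) auto
  moreover have "\<Union>\<U> = topspace ?Y"
  proof -
    obtain C where "C \<in> connected_components_of X"
      using topspace_X_nonempty Union_connected_components_of[of X] by blast
    then have "\<Union>\<U> = insert None (Some ` \<Union>(connected_components_of X))"
      unfolding \<U>_def by (auto simp: UN_insert_distrib image_Union)
    then show ?thesis
      by (simp add: Union_connected_components_of topspace_zeta)
  qed
  ultimately show ?thesis
    by (simp add: connectedin_topspace)
qed

lemma zeta_in_one_point_connectifications:
  assumes "Z \<in> Zsets X B" "Ti_space i X"
  shows "zeta X B Z \<in> one_point_connectifications i X"
proof -
  have "topspace (zeta X B Z) - {None} = Some ` topspace X"
    by (auto simp: topspace_zeta)
  then have "X homeomorphic_space subtopology (zeta X B Z) (topspace (zeta X B Z) - {None})"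
    using homeomorphic_map_zeta homeomorphic_map_imp_homeomorphic_space by metis
  moreover have "None \<in> topspace (zeta X B Z)"
    by (simp add: topspace_zeta)
  ultimately have "Ti_space i (zeta X B Z)"
    using Ti_space_one_point[OF completely_regular_space_zeta t1_space_zeta _ _ assms(2)] by blast
  moreover have "connected_space (zeta X B Z)"
    using assms(1) connected_space_zeta unfolding Zsets_def by blast
  ultimately show ?thesis
    unfolding one_point_connectifications_def
    by (intro CollectI conjI topspace_zeta homeomorphic_map_zeta closure_of_zeta_dense)
qed

end

lemma opc_le_zeta_if_subset:
  assumes Z1: "remainder_compactum Z1" and Z2: "remainder_compactum Z2" and "Z1 \<subseteq> Z2"
  shows "opc_le X (zeta X B Z2) (zeta X B Z1)"
proof -
  have "openin (zeta X B Z1) N" if N: "openin (zeta X B Z2) N" for N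
  proof -
    obtain V where V: "openin B V" "None \<in> N \<longrightarrow> Z2 \<subseteq> V" "None \<notin> N \<longrightarrow> V \<inter> Z2 = {}"
        "topspace X \<inter> Some -` N = V \<inter> topspace X"
      using N unfolding openin_zeta[OF Z2] by blast
    with \<open>Z1 \<subseteq> Z2\<close> have "None \<in> N \<longrightarrow> Z1 \<subseteq> V" "None \<notin> N \<longrightarrow> V \<inter> Z1 = {}"
      by auto
    with N V(1,4) show ?thesis
      unfolding openin_zeta[OF Z1] openin_zeta[OF Z2] by blast
  qed
  moreover have "topspace (zeta X B Z2) = topspace (zeta X B Z1)"
    by (simp add: topspace_zeta Z1 Z2)
  ultimately have "continuous_map (zeta X B Z1) (zeta X B Z2) id"
    using topology_finer_continuous_id by blast
  then show ?thesis
    unfolding opc_le_def by auto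
qed

text \<open>Continuity of f at the extra point of \<zeta>(Z1), read off in \<beta>X through the
  density of X.\<close>

lemma zeta_map_near_contracted_point:
  assumes Z1: "remainder_compactum Z1" and Z2: "remainder_compactum Z2"
    and f: "continuous_map (zeta X B Z1) (zeta X B Z2) f" "\<forall>x\<in>topspace X. f (Some x) = Some x"
    and N: "openin (zeta X B Z2) N" "f None \<in> N"
    and b: "b \<in> Z1" "openin B W" "b \<in> W"
  obtains x where "x \<in> topspace X" "x \<in> W" "Some x \<in> N"
proof -
  let ?P = "{y \<in> topspace (zeta X B Z1). f y \<in> N}"
  have "openin (zeta X B Z1) ?P"
    using f(1) N(1) by (rule openin_continuous_map_preimage)
  moreover have "None \<in> ?P"
    using N(2) by (simp add: topspace_zeta[OF Z1])
  ultimately obtain V where V: "openin B V" "Z1 \<subseteq> V" "V \<inter> topspace X \<subseteq> Some -` ?P"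
    by (rule zeta_neighbourhood_None[OF Z1])
  have "b \<in> V \<inter> W"
    using V(2) b by blast
  then obtain x where x: "x \<in> topspace X" "x \<in> V \<inter> W"
    by (rule openin_meets_topspace_X[OF openin_Int[OF V(1) b(2)]])
  then have "f (Some x) \<in> N"
    using V(3) by blast
  with x f(2) show ?thesis
    using that by simp
qed

lemma subset_if_opc_le_zeta:
  assumes Z1: "remainder_compactum Z1" and Z2: "remainder_compactum Z2"
    and "opc_le X (zeta X B Z2) (zeta X B Z1)"
  shows "Z1 \<subseteq> Z2"
proof -
  obtain f where f: "continuous_map (zeta X B Z1) (zeta X B Z2) f" "\<forall>x\<in>topspace X. f (Some x) = Some x"
    using assms(3) unfolding opc_le_def by blast
  note near = zeta_map_near_contracted_point[OF Z1 Z2 f]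
  obtain b0 where b0: "b0 \<in> Z1"
    using Z1 unfolding remainder_compactum_def by blast
  have f_None: "f None = None"
  proof (rule ccontr)
    assume "f None \<noteq> None"
    moreover have "None \<in> topspace (zeta X B Z1)"
      by (simp add: topspace_zeta[OF Z1])
    then have "f None \<in> insert None (Some ` topspace X)"
      using continuous_map_image_subset_topspace[OF f(1)] topspace_zeta[OF Z2] by blast
    ultimately obtain x0 where x0: "x0 \<in> topspace X" "f None = Some x0"
      by auto
    have "b0 \<in> topspace B - topspace X"
      using b0 Z1 unfolding remainder_compactum_def by blast
    with x0 topspace_X_subset have "b0 \<in> topspace B" "x0 \<in> topspace B" "b0 \<noteq> x0"
      by auto
    then obtain W U where WU: "openin B W" "openin B U" "b0 \<in> W" "x0 \<in> U" "disjnt W U"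
      using Hausdorff_space_B unfolding Hausdorff_space_def by blast
    have "f None \<in> Some ` (U \<inter> topspace X)"
      using x0 WU(4) by simp
    then obtain x where "x \<in> W" "Some x \<in> Some ` (U \<inter> topspace X)"
      by (rule near[OF openin_zeta_Some[OF Z2 WU(2)] _ b0 WU(1,3)])
    then have "x \<in> W \<inter> U"
      by blast
    with WU(5) show False
      by (simp add: disjnt_def)
  qed
  show ?thesis
  proof
    fix b assume b: "b \<in> Z1"
    show "b \<in> Z2"
    proof (rule ccontr)
      assume "b \<notin> Z2"
      have "b \<in> topspace B"
        using b Z1 unfolding remainder_compactum_def by blast
      with Z2 \<open>b \<notin> Z2\<close> have "compactin B Z2" "compactin B {b}" "disjnt Z2 {b}"
        unfolding remainder_compactum_def by simp_all
      then obtain U W where UW: "openin B U" "openin B W" "Z2 \<subseteq> U" "{b} \<subseteq> W" "disjnt U W"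
        by (rule Hausdorff_space_compact_separation[OF Hausdorff_space_B])
      have "f None \<in> insert None (Some ` (U \<inter> topspace X))"
        by (simp add: f_None)
      moreover have "b \<in> W"
        using UW(4) by simp
      ultimately obtain x where "x \<in> W" "Some x \<in> insert None (Some ` (U \<inter> topspace X))"
        by (rule near[OF openin_zeta_insert_None[OF Z2 UW(1,3)] _ b UW(2)])
      then have "x \<in> U \<inter> W"
        by blast
      with UW(5) show False
        by (simp add: disjnt_def)
    qed
  qed
qed

lemma opc_le_zeta_iff:
  assumes "remainder_compactum Z1" "remainder_compactum Z2"
  shows "opc_le X (zeta X B Z2) (zeta X B Z1) \<longleftrightarrow> Z1 \<subseteq> Z2"
  using assms opc_le_zeta_if_subset subset_if_opc_le_zeta by blast

lemma inj_on_zeta: "inj_on (zeta X B) {Z. remainder_compactum Z}"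
proof (rule inj_onI)
  fix Z1 Z2 assume Z: "Z1 \<in> {Z. remainder_compactum Z}" "Z2 \<in> {Z. remainder_compactum Z}"
    and eq: "zeta X B Z1 = zeta X B Z2"
  have "opc_le X Y Y" for Y
    unfolding opc_le_def by (intro exI[of _ id]) auto
  then show "Z1 = Z2"
    using opc_le_zeta_iff Z eq by (metis mem_Collect_eq subset_antisym)
qed

end

section \<open>The compactum determined by a one-point connectification\<close>

locale one_point_connectification_of = stone_cech_compactification +
  fixes i :: sep_axiom and Y :: "'a option topology"
  assumes nonempty: "topspace X \<noteq> {}"
    and locally_connected: "locally_connected_space X"
    and connectification: "Y \<in> one_point_connectifications i X"
begin

lemma topspace_Y: "topspace Y = insert None (Some ` topspace X)"
  and homeomorphic_map_Y: "homeomorphic_map X (subtopology Y (Some ` topspace X)) Some"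
  and connected_space_Y: "connected_space Y"
  and Ti_space_Y: "Ti_space i Y"
  using connectification unfolding one_point_connectifications_def by blast+

lemma continuous_map_Some: "continuous_map X Y Some"
  using homeomorphic_imp_continuous_map[OF homeomorphic_map_Y] continuous_map_in_subtopology by blast

lemma openin_trace_Y:
  assumes "openin Y N"
  shows "openin X (topspace X \<inter> Some -` N)"
proof -
  have "topspace X \<inter> Some -` N = {x \<in> topspace X. Some x \<in> N}"
    by blast
  with openin_continuous_map_preimage[OF continuous_map_Some assms] show ?thesis
    by simp
qed

lemma openin_Y_Some_image:
  assumes "U \<subseteq> topspace X"
  shows "openin Y (Some ` U) \<longleftrightarrow> openin X U"
proof -
  have "closedin Y {None}"
    by (rule closedin_t1_singleton[OF Ti_space_imp_t1_space[OF Ti_space_Y]]) (simp add: topspace_Y)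
  then have "openin Y (topspace Y - {None})"
    by (rule openin_diff[OF openin_topspace])
  moreover have "topspace Y - {None} = Some ` topspace X"
    unfolding topspace_Y by auto
  ultimately have "openin Y (Some ` topspace X)"
    by (simp only:)
  then have "openin Y (Some ` U) \<longleftrightarrow> openin (subtopology Y (Some ` topspace X)) (Some ` U)"
    by (simp add: openin_open_subtopology image_mono[OF assms])
  also have "\<dots> \<longleftrightarrow> openin X U"
    using homeomorphic_map_openness[OF homeomorphic_map_Y assms] .
  finally show ?thesis .
qed

definition cluster_set :: "'a set" where
  "cluster_set = (\<Inter>U\<in>{U. openin Y U \<and> None \<in> U}. B closure_of (topspace X \<inter> Some -` U))"

lemma closedin_cluster_set: "closedin B cluster_set"
proof -
  have "topspace Y \<in> {U. openin Y U \<and> None \<in> U}"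
    using openin_topspace[of Y] by (simp add: topspace_Y)
  then show ?thesis
    unfolding cluster_set_def by (intro closedin_Inter) (auto simp: closedin_closure_of)
qed

lemma cluster_set_disjoint_X: "cluster_set \<inter> topspace X = {}"
proof -
  have "x \<notin> cluster_set" if x: "x \<in> topspace X" for x
  proof
    assume "x \<in> cluster_set"
    have "None \<in> topspace Y" "Some x \<in> topspace Y" "None \<noteq> Some x"
      using x by (simp_all add: topspace_Y)
    then obtain U U' where UU: "openin Y U" "openin Y U'" "None \<in> U" "Some x \<in> U'" "disjnt U U'"
      using Ti_space_imp_Hausdorff_space[OF Ti_space_Y] unfolding Hausdorff_space_def by blast
    obtain V' where V': "openin B V'" "topspace X \<inter> Some -` U' = V' \<inter> topspace X"
      using openin_trace_Y[OF UU(2)] unfolding openin_X_iff by blast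
    have "x \<in> B closure_of (topspace X \<inter> Some -` U)"
      using \<open>x \<in> cluster_set\<close> UU(1,3) unfolding cluster_set_def by blast
    moreover have "x \<in> V'"
      using V'(2) x UU(4) by blast
    ultimately obtain y where "y \<in> topspace X \<inter> Some -` U" "y \<in> V'"
      using V'(1) unfolding in_closure_of by blast
    with V'(2) UU(5) show False
      by (auto simp: disjnt_def)
  qed
  then show ?thesis
    by blast
qed

lemma cluster_set_separation:
  assumes K: "closedin B K" and KZ: "K \<inter> cluster_set = {}"
  obtains U where "openin Y U" "None \<in> U" "B closure_of (topspace X \<inter> Some -` U) \<inter> K = {}"
proof -
  let ?cl = "\<lambda>U. B closure_of (topspace X \<inter> Some -` U)"
  let ?\<F> = "?cl ` {U. openin Y U \<and> None \<in> U}"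
  have cK: "compactin B K"
    using closedin_compact_space[OF compact_space_B K] .
  have closed: "\<forall>C \<in> ?\<F>. closedin B C"
    by (simp add: closedin_closure_of)
  have "\<exists>\<G>. finite \<G> \<and> \<G> \<subseteq> ?\<F> \<and> K \<inter> \<Inter>\<G> = {}"
  proof (rule ccontr)
    assume "\<nexists>\<G>. finite \<G> \<and> \<G> \<subseteq> ?\<F> \<and> K \<inter> \<Inter>\<G> = {}"
    then have "\<forall>\<G>. finite \<G> \<and> \<G> \<subseteq> ?\<F> \<longrightarrow> K \<inter> \<Inter>\<G> \<noteq> {}"
      by blast
    with closed have "K \<inter> \<Inter>?\<F> \<noteq> {}"
      by (rule compactin_fip[THEN iffD1, OF cK, THEN conjunct2, THEN spec, THEN mp, OF conjI])
    with KZ show False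
      unfolding cluster_set_def by blast
  qed
  then obtain \<G> where \<G>: "finite \<G>" "\<G> \<subseteq> ?\<F>" "K \<inter> \<Inter>\<G> = {}"
    by blast
  obtain \<F> where \<F>: "\<F> \<subseteq> {U. openin Y U \<and> None \<in> U}" "finite \<F>" "\<G> = ?cl ` \<F>"
    using finite_subset_image[OF \<G>(1,2)] by blast
  define U where "U = topspace Y \<inter> \<Inter>\<F>"
  have "openin Y U"
    unfolding U_def using \<F>(1,2) by (intro openin_Int_Inter) blast+
  moreover have "None \<in> U"
    unfolding U_def using \<F>(1) by (auto simp: topspace_Y)
  moreover have "?cl U \<subseteq> ?cl V" if "V \<in> \<F>" for V
    using that unfolding U_def by (intro closure_of_mono) blast
  then have "?cl U \<subseteq> \<Inter>(?cl ` \<F>)"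
    by blast
  ultimately show ?thesis
    using \<G>(3) \<F>(3) that by blast
qed

lemma cluster_set_meets_closure_of_component:
  assumes C: "C \<in> connected_components_of X"
  shows "cluster_set \<inter> B closure_of C \<noteq> {}"
proof
  assume "cluster_set \<inter> B closure_of C = {}"
  then obtain U where U: "openin Y U" "None \<in> U"
      "B closure_of (topspace X \<inter> Some -` U) \<inter> B closure_of C = {}"
    using cluster_set_separation[OF closedin_closure_of] by (metis Int_commute)
  have CX: "C \<subseteq> topspace X"
    using C connected_components_of_subset by blast
  have "topspace X \<inter> Some -` U \<subseteq> B closure_of (topspace X \<inter> Some -` U)"
    using topspace_X_subset by (intro closure_of_subset) blast
  moreover have "C \<subseteq> B closure_of C"
    using CX topspace_X_subset by (intro closure_of_subset) blast
  ultimately have UC: "topspace X \<inter> Some -` U \<inter> C = {}"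
    using U(3) by blast
  have "openin Y (Some ` C)"
    using openin_connected_components_of_locally_connected_space[OF locally_connected C]
    by (simp add: openin_Y_Some_image CX)
  moreover have "openin Y (topspace Y - Some ` C)"
  proof -
    have "openin X (topspace X - C)"
      using closedin_connected_components_of[OF C] by (rule openin_diff[OF openin_topspace])
    then have "openin Y (Some ` (topspace X - C))"
      by (simp add: openin_Y_Some_image)
    moreover have "topspace Y - Some ` C = U \<union> Some ` (topspace X - C)"
      using UC U(2) openin_subset[OF U(1)] unfolding topspace_Y by auto
    ultimately show ?thesis
      using openin_Un[OF U(1)] by simp
  qed
  moreover have "Some ` C \<noteq> {}" "None \<notin> Some ` C"
    using nonempty_connected_components_of[OF C] by auto
  ultimately show False
    using connected_space_Y unfolding connected_space_clopen_in closedin_def topspace_Y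
    by (metis image_mono insertCI CX subset_insertI2)
qed

lemma remainder_compactum_cluster_set: "remainder_compactum cluster_set"
proof -
  obtain C where "C \<in> connected_components_of X"
    using nonempty Union_connected_components_of[of X] by blast
  then have "cluster_set \<noteq> {}"
    using cluster_set_meets_closure_of_component by blast
  moreover have "cluster_set \<subseteq> topspace B - topspace X"
    using closedin_subset[OF closedin_cluster_set] cluster_set_disjoint_X by blast
  moreover have "compactin B cluster_set"
    using closedin_compact_space[OF compact_space_B closedin_cluster_set] .
  ultimately show ?thesis
    unfolding remainder_compactum_def by blast
qed

lemma cluster_set_in_Zsets: "cluster_set \<in> Zsets X B"
  using remainder_compactum_cluster_set cluster_set_meets_closure_of_component
  unfolding Zsets_def remainder_compactum_def by blast

text \<open>Complete regularity of Y enters here: a Urysohn function of Y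
  separating the extra point from the complement of N is extended to \<beta>X.\<close>

lemma cluster_set_neighbourhood:
  assumes N: "openin Y N" "None \<in> N"
  obtains V where "openin B V" "cluster_set \<subseteq> V" "V \<inter> topspace X \<subseteq> Some -` N"
proof -
  have "closedin Y (topspace Y - N)"
    using N(1) by (rule closedin_diff[OF closedin_topspace])
  moreover have "None \<in> topspace Y - (topspace Y - N)"
    using N(2) by (simp add: topspace_Y)
  ultimately obtain g where g: "continuous_map Y (top_of_set {0..1::real}) g" "g None = 0"
      "g ` (topspace Y - N) \<subseteq> {1}"
    using Ti_space_imp_completely_regular_space[OF Ti_space_Y]
    unfolding completely_regular_space_def by blast
  obtain G where G: "continuous_map B (top_of_set {0..1::real}) G"
      "\<And>x. x \<in> topspace X \<Longrightarrow> G x = g (Some x)"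
    using extend_unit_interval_map[OF continuous_map_compose[OF continuous_map_Some g(1)]] by auto
  have gE: "continuous_map Y euclideanreal g" and GE: "continuous_map B euclideanreal G"
    using g(1) G(1) continuous_map_in_subtopology by blast+
  define V where "V = {b \<in> topspace B. G b \<in> {..<1/2}}"
  have "openin B V"
    unfolding V_def using GE by (rule openin_continuous_map_preimage) simp
  moreover have "cluster_set \<subseteq> V"
  proof -
    define U where "U = {y \<in> topspace Y. g y \<in> {..<1/4}}"
    have "openin Y U"
      unfolding U_def using gE by (rule openin_continuous_map_preimage) simp
    moreover have "None \<in> U"
      unfolding U_def using g(2) by (simp add: topspace_Y)
    ultimately have "cluster_set \<subseteq> B closure_of (topspace X \<inter> Some -` U)"
      unfolding cluster_set_def by blast
    also have "\<dots> \<subseteq> {b \<in> topspace B. G b \<in> {..1/4}}"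
    proof (rule closure_of_minimal)
      show "topspace X \<inter> Some -` U \<subseteq> {b \<in> topspace B. G b \<in> {..1/4}}"
        using G(2) topspace_X_subset unfolding U_def by auto
      show "closedin B {b \<in> topspace B. G b \<in> {..1/4}}"
        using GE by (rule closedin_continuous_map_preimage) simp
    qed
    also have "\<dots> \<subseteq> V"
      unfolding V_def by auto
    finally show ?thesis .
  qed
  moreover have "V \<inter> topspace X \<subseteq> Some -` N"
  proof
    fix x assume x: "x \<in> V \<inter> topspace X"
    then have "G x < 1/2" "x \<in> topspace X"
      unfolding V_def by auto
    then have "g (Some x) < 1/2"
      using G(2) by simp
    moreover have "Some x \<in> topspace Y"
      using x by (simp add: topspace_Y)
    ultimately show "x \<in> Some -` N"
      using g(3) by force
  qed
  ultimately show ?thesis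
    using that by blast
qed

lemma openin_Y_if_cluster_set_neighbourhood:
  assumes N: "N \<subseteq> topspace Y" "None \<in> N"
    and V: "openin B V" "cluster_set \<subseteq> V" "topspace X \<inter> Some -` N = V \<inter> topspace X"
  shows "openin Y N"
proof -
  have "closedin B (topspace B - V)" "(topspace B - V) \<inter> cluster_set = {}"
    using V(1,2) by auto
  then obtain U where U: "openin Y U" "None \<in> U"
      "B closure_of (topspace X \<inter> Some -` U) \<inter> (topspace B - V) = {}"
    by (rule cluster_set_separation)
  have "topspace X \<inter> Some -` U \<subseteq> B closure_of (topspace X \<inter> Some -` U)"
    using topspace_X_subset by (intro closure_of_subset) blast
  with U(3) topspace_X_subset have "topspace X \<inter> Some -` U \<subseteq> V"
    by blast
  with V(3) openin_subset[OF U(1)] N(2) have "U \<subseteq> N"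
    unfolding topspace_Y by blast
  moreover have "openin Y (Some ` (topspace X \<inter> Some -` N))"
    using V(1,3) by (subst openin_Y_Some_image) (auto simp: openin_X_iff)
  moreover have "N = U \<union> Some ` (topspace X \<inter> Some -` N)"
    using calculation(1) N U(2) unfolding topspace_Y by auto
  ultimately show ?thesis
    using openin_Un[OF U(1)] by metis
qed

lemma zeta_cluster_set: "zeta X B cluster_set = Y"
  unfolding topology_eq
proof
  fix N
  note openin_zeta_cs = openin_zeta[OF remainder_compactum_cluster_set]
  show "openin (zeta X B cluster_set) N \<longleftrightarrow> openin Y N"
  proof
    assume "openin (zeta X B cluster_set) N"
    then obtain V where V: "N \<subseteq> topspace Y" "openin B V" "None \<in> N \<longrightarrow> cluster_set \<subseteq> V"
        "topspace X \<inter> Some -` N = V \<inter> topspace X"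
      unfolding openin_zeta_cs topspace_Y by blast
    show "openin Y N"
    proof (cases "None \<in> N")
      case True
      with V show ?thesis
        by (intro openin_Y_if_cluster_set_neighbourhood) auto
    next
      case False
      with V(1) have "N = Some ` (topspace X \<inter> Some -` N)"
        unfolding topspace_Y by auto
      moreover have "openin X (topspace X \<inter> Some -` N)"
        using V(2,4) openin_X_iff by auto
      ultimately show ?thesis
        by (metis inf_le1 openin_Y_Some_image)
    qed
  next
    assume N: "openin Y N"
    obtain V0 where V0: "openin B V0" "topspace X \<inter> Some -` N = V0 \<inter> topspace X"
      using openin_trace_Y[OF N] unfolding openin_X_iff by blast
    have NY: "N \<subseteq> insert None (Some ` topspace X)"
      using openin_subset[OF N] by (simp add: topspace_Y)
    show "openin (zeta X B cluster_set) N"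
    proof (cases "None \<in> N")
      case True
      then obtain V1 where V1: "openin B V1" "cluster_set \<subseteq> V1" "V1 \<inter> topspace X \<subseteq> Some -` N"
        using cluster_set_neighbourhood[OF N] by blast
      have "openin B (V0 \<union> V1)" "cluster_set \<subseteq> V0 \<union> V1"
          "topspace X \<inter> Some -` N = (V0 \<union> V1) \<inter> topspace X"
        using V0 V1 by auto
      with NY True show ?thesis
        unfolding openin_zeta_cs by blast
    next
      case False
      have "openin B (V0 - cluster_set)" "(V0 - cluster_set) \<inter> cluster_set = {}"
          "topspace X \<inter> Some -` N = (V0 - cluster_set) \<inter> topspace X"
        using openin_diff[OF V0(1) closedin_cluster_set] V0(2) cluster_set_disjoint_X by auto
      with NY False show ?thesis
        unfolding openin_zeta_cs by blast
    qed
  qed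
qed

end

theorem lemma3p1:
  fixes X B :: "'a topology" and i :: sep_axiom
  assumes "topspace X \<noteq> {}"
    and "locally_connected_space X" and "Ti_space i X"
    and "stone_cech X B"
  shows "(\<forall>Z\<in>Zsets X B. zeta X B Z \<in> one_point_connectifications i X)
       \<and> bij_betw (zeta X B) (Zsets X B) (one_point_connectifications i X)
       \<and> (\<forall>Z1\<in>Zsets X B. \<forall>Z2\<in>Zsets X B. Z1 \<subseteq> Z2 \<longrightarrow> opc_le X (zeta X B Z2) (zeta X B Z1))
       \<and> (\<forall>Z1\<in>Zsets X B. \<forall>Z2\<in>Zsets X B. opc_le X (zeta X B Z2) (zeta X B Z1) \<longrightarrow> Z1 \<subseteq> Z2)"
proof -
  interpret stone_cech_compactification X B
    using assms(4) by unfold_locales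
  have compactum: "remainder_compactum Z" if "Z \<in> Zsets X B" for Z
    using Zsets_imp_remainder_compactum[OF assms(1) that] .
  have into: "\<forall>Z\<in>Zsets X B. zeta X B Z \<in> one_point_connectifications i X"
    using zeta_in_one_point_connectifications[OF compactum _ assms(3)] by blast
  have onto: "one_point_connectifications i X \<subseteq> zeta X B ` Zsets X B"
  proof
    fix Y assume "Y \<in> one_point_connectifications i X"
    then interpret one_point_connectification_of X B i Y
      using assms by unfold_locales
    show "Y \<in> zeta X B ` Zsets X B"
      using cluster_set_in_Zsets zeta_cluster_set by (metis image_eqI)
  qed
  have "inj_on (zeta X B) (Zsets X B)"
    using inj_on_zeta by (rule inj_on_subset) (auto intro: compactum)
  with into onto have "bij_betw (zeta X B) (Zsets X B) (one_point_connectifications i X)"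
    unfolding bij_betw_def by blast
  with into show ?thesis
    using opc_le_zeta_iff compactum by blast
qed

end
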